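(* Let $V=\operatorname{span}(x_1,\dots,x_7)$, let $R=\operatorname{span}(r_1,\dots,r_7)\subset V\otimes V$, and let $W=\sum_{i,j,l}\varepsilon^{ijl}x_i\otimes x_j\otimes x_l\in V^{\otimes3}$. (1) The linear map $V^*\otimes V^*\to V$, $\lambda\otimes\mu\mapsto\sum_{i,j,l}\varepsilon^{ijl}x_i\lambda(x_j)\mu(x_l)$, determined by $W$ has rank $7$. (2) If $\mathbb{O}_k$ is a division algebra (for example $k=\mathbb{R}$), every nonzero element of $R$ has rank $6$. (3) If $k$ is algebraically closed of characteristic $\ne2$, every nonzero element of $R$ has rank $\ge4$, and rank exactly $4$ occurs.
   Context: Let $k$ be a field of characteristic $\ne 2$. Label the points of the Fano plane by $1,\dots,7$ so that its directed lines are $123,145,167,246,275,374,365$; for $i,j,l$ put $\varepsilon^{ijl}=1$ if $(i,j,l)$ is a cyclic rotation of a directed line, $-1$ if $(j,i,l)$ is, and $0$ otherwise. $r_i=\sum_{m,n}\varepsilon^{imn}x_m\otimes x_n$ are the defining relations of $A_k=T(V)/(R)$. The rank of an element of $V\otimes V$ is its rank as a $7\times7$ matrix of coefficients. $\mathbb{O}_k$ is the octonion algebra with basis $1,o_1,\dots,o_7$ and $o_ro_s=\sum_i\varepsilon^{rsi}o_i-\delta_{rs}$. *)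

theory Defs
  imports "HOL-Analysis.Analysis" "HOL-Computational_Algebra.Polynomial"
begin

text \<open>Points of the Fano plane are the elements of the type 7 written as numerals
  1,...,7 (note (7::7) is the seventh point; it equals 0 in the ring structure of the type,
  but is distinct from the numerals 1..6).\<close>

definition fano_lines :: "(7 \<times> 7 \<times> 7) set" where
  "fano_lines = {(1,2,3),(1,4,5),(1,6,7),(2,4,6),(2,7,5),(3,7,4),(3,6,5)}"

definition fano_cyc :: "(7 \<times> 7 \<times> 7) set" where
  "fano_cyc = {(i,j,l). (i,j,l) \<in> fano_lines \<or> (j,l,i) \<in> fano_lines \<or> (l,i,j) \<in> fano_lines}"

definition eps :: "7 \<Rightarrow> 7 \<Rightarrow> 7 \<Rightarrow> 'a::ring_1" where
  "eps i j l = (if (i,j,l) \<in> fano_cyc then 1 else if (j,i,l) \<in> fano_cyc then -1 else 0)"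

text \<open>Elements of V \<otimes> V are 7x7 coefficient matrices: entry m n is the coefficient of x_m \<otimes> x_n.
  r_i has coefficient matrix (eps i m n).\<close>
definition rel :: "7 \<Rightarrow> 'a::field^7^7" where
  "rel i = (\<chi> m n. eps i m n)"

definition R_space :: "('a::field^7^7) set" where
  "R_space = {M. \<exists>c::'a^7. M = (\<chi> m n. \<Sum>i\<in>UNIV. c$i * rel i $ m $ n)}"

text \<open>Matrix of the linear map V*\<otimes>V* \<rightarrow> V, x_j^* \<otimes> x_l^* \<mapsto> \<Sum>_i eps^{ijl} x_i,
  with respect to the bases x_j^* \<otimes> x_l^* (columns indexed by pairs (j,l)) and x_i (rows).\<close>
definition W_map_matrix :: "'a::field^(7\<times>7)^7" where
  "W_map_matrix = (\<chi> i p. eps i (fst p) (snd p))"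

text \<open>Octonions: pairs (a_0, a) standing for a_0 1 + \<Sum>_r a_r o_r, with the multiplication
  obtained by bilinear extension of o_r o_s = \<Sum>_i eps^{rsi} o_i - \<delta>_{rs}.\<close>
definition octo_mult :: "('a::field \<times> ('a^7)) \<Rightarrow> ('a \<times> ('a^7)) \<Rightarrow> ('a \<times> ('a^7))" where
  "octo_mult x y =
     (fst x * fst y - (\<Sum>r\<in>UNIV. snd x $ r * snd y $ r),
      (\<chi> i. fst x * snd y $ i + fst y * snd x $ i
            + (\<Sum>r\<in>UNIV. \<Sum>s\<in>UNIV. eps r s i * snd x $ r * snd y $ s)))"

definition octo_division :: "'a::field itself \<Rightarrow> bool" where
  "octo_division _ = (\<forall>x::('a \<times> ('a^7)). x \<noteq> (0,0) \<longrightarrow>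
       bij (octo_mult x) \<and> bij (\<lambda>y. octo_mult y x))"

end

theory Submission
  imports Defs
begin

text \<open>In the column (j,l), j \<noteq> l, of the matrix of W the only nonzero entry sits in the row of
  the third point of the line through j and l, so the seven rows are independent.

  An element of R is the alternating matrix M_c = \<Sum>_i c_i r_i, and v M_c is the imaginary part
  of the octonion product c v of imaginary octonions. Hence M_c c = 0, and when O_k is a division
  algebra the left kernel of M_c is the line through c: the rank is 6.

  For each line of the Fano plane, the 4 x 4 Pfaffian of M_c on the complementary four points is
  the sum of the squares of the c_i over the line, and two further Pfaffians add up to
  -2 c_1 c_2. If all of them vanish then c = 0, so some 4 x 4 Pfaffian is nonzero and the rank
  is at least 4. The isotropic element c = x_1 + i x_2 (i^2 = -1) attains rank 4.\<close>

lemma vector_matrix_mult_in_rowspace: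
  fixes M :: "'a::field^'n^'m"
  shows "v v* M \<in> vec.span (rows M)"
  using matrix_vector_mult_in_columnspace_gen[of "transpose M" v] by simp

lemma card_le_rank_if_independent_rows:
  fixes M :: "'a::field^'n^'m"
  assumes indep: "\<And>v. (\<forall>i. i \<notin> J \<longrightarrow> v$i = 0) \<Longrightarrow> v v* M = 0 \<Longrightarrow> v = 0"
  shows "card J \<le> rank M"
proof -
  define S where "S = {v::'a^'m. \<forall>i. i \<notin> J \<longrightarrow> v$i = 0}"
  have "vec.span S = S"
    by (auto simp: S_def vec.subspace_def)
  moreover have "inj_on ((*v) (transpose M)) S"
  proof (rule inj_onI)
    fix x y assume "x \<in> S" "y \<in> S" "transpose M *v x = transpose M *v y"
    then have "x - y = 0"
      by (intro indep) (simp_all add: S_def vector_matrix_mult_diff_distrib)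
    then show "x = y" by simp
  qed
  ultimately have "vec.dim ((*v) (transpose M) ` S) = vec.dim S"
    by (metis vec.dim_image_eq matrix_vector_mul_linear_gen)
  also have "\<dots> = card J"
    unfolding S_def by (rule dim_substandard_cart)
  finally have "vec.dim ((*v) (transpose M) ` S) = card J" .
  moreover have "(*v) (transpose M) ` S \<subseteq> vec.span (rows M)"
    using vector_matrix_mult_in_rowspace by auto
  ultimately show ?thesis
    unfolding row_rank_def_gen by (metis vec.dim_mono)
qed

lemma rank_le_card_if_rows_spanned:
  fixes M :: "'a::field^'n^'m"
  assumes "rows M \<subseteq> vec.span S" "finite S"
  shows "rank M \<le> card S"
  unfolding row_rank_def_gen by (rule vec.dim_le_card[OF assms])

lemma rank_le_nrows: "rank (M :: 'a::field^'n^'m) \<le> CARD('m)"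
proof -
  have rows: "rows M = range (\<lambda>i. row i M)" by (auto simp: rows_def)
  have "rank M \<le> card (rows M)"
    by (rule rank_le_card_if_rows_spanned) (auto simp: rows intro: vec.span_base)
  also have "card (rows M) \<le> CARD('m)"
    unfolding rows by (rule card_image_le) simp
  finally show ?thesis .
qed

lemma rank_zero: "rank (0 :: 'a::field^'n^'m) = 0"
proof -
  have "rows (0 :: 'a^'n^'m) = {0}" by (auto simp: rows_def row_def vec_eq_iff)
  then show ?thesis by (simp add: row_rank_def_gen)
qed

lemma corank_le_1_if_left_kernel_in_line:
  fixes M :: "'a::field^'n^'m" and c :: "'a^'m"
  assumes c: "c \<noteq> 0" and kernel: "\<And>v. v v* M = 0 \<Longrightarrow> \<exists>t. v = t *s c"
  shows "CARD('m) - 1 \<le> rank M"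
proof -
  obtain k where k: "c$k \<noteq> 0" using c by (auto simp: vec_eq_iff)
  have "card (UNIV - {k}) \<le> rank M"
  proof (rule card_le_rank_if_independent_rows)
    fix v :: "'a^'m" assume "\<forall>i. i \<notin> UNIV - {k} \<longrightarrow> v$i = 0" "v v* M = 0"
    moreover obtain t where "v = t *s c" using kernel \<open>v v* M = 0\<close> by blast
    ultimately show "v = 0" using k by auto
  qed
  then show ?thesis by (simp add: card_Diff_singleton)
qed

lemma rank_less_ncols_if_nontrivial_kernel:
  fixes M :: "'a::field^'n^'m"
  assumes Mc: "M *v c = 0" and c: "c \<noteq> 0"
  shows "rank M < CARD('n)"
proof -
  define H where "H = {u::'a^'n. (\<Sum>j\<in>UNIV. u$j * c$j) = 0}"
  have "vec.subspace H"
    by (simp add: vec.subspace_def H_def distrib_right sum.distrib mult.assoc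
        flip: sum_distrib_left)
  moreover have "rows M \<subseteq> H"
    using Mc by (auto simp: rows_def row_def H_def matrix_vector_mult_def vec_eq_iff)
  ultimately have "vec.span (rows M) \<subseteq> H"
    by (rule vec.span_minimal[rotated])
  moreover obtain k where "c$k \<noteq> 0" using c by (auto simp: vec_eq_iff)
  then have "axis k 1 \<notin> H"
    by (simp add: H_def axis_def if_distrib[of "\<lambda>x. x * _"] cong: if_cong)
  ultimately have "vec.span (rows M) \<subset> vec.span UNIV" by auto
  then have "vec.dim (rows M) < vec.dim (UNIV :: ('a^'n) set)" by (rule vec.dim_psubset)
  then show ?thesis by (simp only: row_rank_def_gen vec_dim_card)
qed

lemma antisym_matrix_vector_mult:
  fixes M :: "'a::comm_ring_1^'n^'n"
  assumes "\<And>i j. M$i$j = - M$j$i"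
  shows "M *v v = - (v v* M)"
proof -
  have "(M *v v)$i = - (v v* M)$i" for i
    unfolding matrix_vector_mult_def vector_matrix_mult_def
    by (simp add: assms[of i] sum_negf[symmetric] mult.commute)
  then show ?thesis by (simp add: vec_eq_iff)
qed

lemma sum_antisym_eq_0:
  fixes f :: "'i::finite \<Rightarrow> 'i \<Rightarrow> 'a::field"
  assumes two: "(2::'a) \<noteq> 0" and antisym: "\<And>i j. f j i = - f i j"
  shows "(\<Sum>i\<in>UNIV. \<Sum>j\<in>UNIV. f i j) = 0"
proof -
  define S where "S = (\<Sum>i\<in>UNIV. \<Sum>j\<in>UNIV. f i j)"
  have "S = (\<Sum>j\<in>UNIV. \<Sum>i\<in>UNIV. f i j)" unfolding S_def by (rule sum.swap)
  also have "\<dots> = (\<Sum>j\<in>UNIV. \<Sum>i\<in>UNIV. - f j i)"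
    by (intro sum.cong refl) (rule antisym)
  also have "\<dots> = - S" unfolding S_def by (simp add: sum_negf)
  finally have "2 * S = 0" by simp
  with two show ?thesis by (simp add: S_def)
qed

definition pfaffian4 :: "'a::comm_ring^'n^'n \<Rightarrow> 'n \<Rightarrow> 'n \<Rightarrow> 'n \<Rightarrow> 'n \<Rightarrow> 'a" where
  "pfaffian4 M a b c d = M$a$b * M$c$d - M$a$c * M$b$d + M$a$d * M$b$c"

text \<open>Pf(A) v is a combination of the components of v A, because a 4 x 4 alternating A has
  an alternating dual A', with entries \<plusminus> those of A, such that A A' = Pf(A) I.\<close>
lemma pfaffian4_mult_left_kernel_eq_0:
  fixes M :: "'a::field^'n^'n"
  assumes alt: "\<And>i j. M$i$j = - M$j$i" and diag: "\<And>i. M$i$i = 0"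
    and col: "\<And>n. v$a * M$a$n + v$b * M$b$n + v$c * M$c$n + v$d * M$d$n = 0"
  shows "pfaffian4 M a b c d * v$a = 0" "pfaffian4 M a b c d * v$b = 0"
      "pfaffian4 M a b c d * v$c = 0" "pfaffian4 M a b c d * v$d = 0"
proof -
  have ea: "v$b * M$a$b + v$c * M$a$c + v$d * M$a$d = 0"
    using col[of a] unfolding diag alt[of b a] alt[of c a] alt[of d a]
    by (simp add: algebra_simps neg_eq_iff_add_eq_0)
  have eb: "v$a * M$a$b - v$c * M$b$c - v$d * M$b$d = 0"
    using col[of b] unfolding diag alt[of c b] alt[of d b] by simp
  have ec: "v$a * M$a$c + v$b * M$b$c - v$d * M$c$d = 0"
    using col[of c] unfolding diag alt[of d c] by simp
  have ed: "v$a * M$a$d + v$b * M$b$d + v$c * M$c$d = 0"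
    using col[of d] unfolding diag by simp
  have "pfaffian4 M a b c d * v$a = M$c$d * (v$a * M$a$b - v$c * M$b$c - v$d * M$b$d)
      - M$b$d * (v$a * M$a$c + v$b * M$b$c - v$d * M$c$d)
      + M$b$c * (v$a * M$a$d + v$b * M$b$d + v$c * M$c$d)"
    unfolding pfaffian4_def by (simp add: algebra_simps)
  then show "pfaffian4 M a b c d * v$a = 0" using eb ec ed by simp
  have "pfaffian4 M a b c d * v$b = M$c$d * (v$b * M$a$b + v$c * M$a$c + v$d * M$a$d)
      + M$a$d * (v$a * M$a$c + v$b * M$b$c - v$d * M$c$d)
      - M$a$c * (v$a * M$a$d + v$b * M$b$d + v$c * M$c$d)"
    unfolding pfaffian4_def by (simp add: algebra_simps)
  then show "pfaffian4 M a b c d * v$b = 0" using ea ec ed by simp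
  have "pfaffian4 M a b c d * v$c = - M$b$d * (v$b * M$a$b + v$c * M$a$c + v$d * M$a$d)
      - M$a$d * (v$a * M$a$b - v$c * M$b$c - v$d * M$b$d)
      + M$a$b * (v$a * M$a$d + v$b * M$b$d + v$c * M$c$d)"
    unfolding pfaffian4_def by (simp add: algebra_simps)
  then show "pfaffian4 M a b c d * v$c = 0" using ea eb ed by simp
  have "pfaffian4 M a b c d * v$d = M$b$c * (v$b * M$a$b + v$c * M$a$c + v$d * M$a$d)
      + M$a$c * (v$a * M$a$b - v$c * M$b$c - v$d * M$b$d)
      - M$a$b * (v$a * M$a$c + v$b * M$b$c - v$d * M$c$d)"
    unfolding pfaffian4_def by (simp add: algebra_simps)
  then show "pfaffian4 M a b c d * v$d = 0" using ea eb ec by simp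
qed

lemma rank_ge_4_if_pfaffian4_nonzero:
  fixes M :: "'a::field^'n^'n"
  assumes alt: "\<And>i j. M$i$j = - M$j$i" and diag: "\<And>i. M$i$i = 0"
    and abcd: "distinct [a,b,c,d]" and pf: "pfaffian4 M a b c d \<noteq> 0"
  shows "4 \<le> rank M"
proof -
  have "card {a,b,c,d} \<le> rank M"
  proof (rule card_le_rank_if_independent_rows)
    fix v :: "'a^'n"
    assume supp: "\<forall>i. i \<notin> {a,b,c,d} \<longrightarrow> v$i = 0" and vM: "v v* M = 0"
    have col: "v$a * M$a$n + v$b * M$b$n + v$c * M$c$n + v$d * M$d$n = 0" for n
    proof -
      have "(\<Sum>i\<in>UNIV. v$i * M$i$n) = (\<Sum>i\<in>{a,b,c,d}. v$i * M$i$n)"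
        using supp by (intro sum.mono_neutral_right) auto
      then show ?thesis
        using vM abcd by (simp add: vec_eq_iff vector_matrix_mult_def add.assoc)
    qed
    have "pfaffian4 M a b c d * v$i = 0" if "i \<in> {a,b,c,d}" for i
      using pfaffian4_mult_left_kernel_eq_0[OF alt diag col] that by blast
    then show "v = 0" using supp pf by (metis mult_eq_0_iff vec_eq_iff zero_index)
  qed
  then show ?thesis using abcd by simp
qed

lemma exhaust_7:
  fixes x :: 7
  shows "x = 1 \<or> x = 2 \<or> x = 3 \<or> x = 4 \<or> x = 5 \<or> x = 6 \<or> x = 7"
proof (induct x)
  case (of_int z)
  then have "z = 0 \<or> z = 1 \<or> z = 2 \<or> z = 3 \<or> z = 4 \<or> z = 5 \<or> z = 6" by fastforce
  then show ?case by auto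
qed

lemma all_7: "(\<forall>i::7. P i) \<longleftrightarrow> P 1 \<and> P 2 \<and> P 3 \<and> P 4 \<and> P 5 \<and> P 6 \<and> P 7"
  by (metis exhaust_7)

lemma sum_UNIV_7: "sum f (UNIV::7 set) = f 1 + f 2 + f 3 + f 4 + f 5 + f 6 + f 7"
proof -
  have UNIV_7: "(UNIV::7 set) = {1,2,3,4,5,6,7}" using exhaust_7 by auto
  show ?thesis unfolding UNIV_7 by (simp add: add.assoc)
qed

lemma fano_cyc_rotate: "(i,j,l) \<in> fano_cyc \<longleftrightarrow> (j,l,i) \<in> fano_cyc"
  by (auto simp: fano_cyc_def)

lemma fano_cyc_not_swap:
  "(i,j,l) \<in> fano_cyc \<Longrightarrow> (j,i,l) \<notin> fano_cyc \<and> i \<noteq> j \<and> j \<noteq> l \<and> i \<noteq> l"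
  apply (simp only: fano_cyc_def fano_lines_def mem_Collect_eq case_prod_conv insert_iff
      empty_iff prod.inject)
  apply (elim disjE conjE)
  apply (simp_all add: fano_cyc_def fano_lines_def)
  done

lemmas eps_unfold = eps_def fano_cyc_def fano_lines_def

lemma eps_swap: "(eps j i l :: 'a::ring_1) = - eps i j l"
  by (auto simp: eps_def dest: fano_cyc_not_swap)

lemma eps_rotate: "(eps i j l :: 'a::ring_1) = eps j l i"
  unfolding eps_def using fano_cyc_rotate[of i j l] fano_cyc_rotate[of l j i] by simp

lemma eps_swap23: "(eps i l j :: 'a::ring_1) = - eps i j l"
  by (metis eps_rotate eps_swap)

lemma eps_repeat: "(eps i j j :: 'a::ring_1) = 0"
  by (auto simp: eps_def dest: fano_cyc_not_swap)

lemma rank_W_map_matrix: "rank (W_map_matrix :: 'a::field^(7\<times>7)^7) = 7"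
proof -
  have "card (UNIV :: 7 set) \<le> rank (W_map_matrix :: 'a^(7\<times>7)^7)"
  proof (rule card_le_rank_if_independent_rows)
    fix v :: "'a^7" assume "v v* W_map_matrix = 0"
    then have "(\<Sum>i\<in>UNIV. v$i * eps i j l) = 0" for j l
      by (auto simp: vec_eq_iff vector_matrix_mult_def W_map_matrix_def dest: spec[of _ "(j,l)"])
    from this[of 2 3] this[of 3 1] this[of 1 2] this[of 5 1] this[of 1 4] this[of 7 1] this[of 1 6]
    show "v = 0" by (simp add: vec_eq_iff all_7 sum_UNIV_7 eps_unfold)
  qed
  with rank_le_nrows[of "W_map_matrix :: 'a^(7\<times>7)^7"] show ?thesis by simp
qed

definition rel_comb :: "'a::field^7 \<Rightarrow> 'a^7^7" where
  "rel_comb c = (\<chi> m n. \<Sum>i\<in>UNIV. c$i * eps i m n)"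

lemma R_space_iff_rel_comb: "M \<in> R_space \<longleftrightarrow> (\<exists>c. M = rel_comb c)"
  by (simp add: R_space_def rel_comb_def rel_def)

lemma rel_comb_0 [simp]: "rel_comb 0 = 0"
  by (simp add: rel_comb_def vec_eq_iff)

lemma rel_comb_alternating:
  "rel_comb c $ m $ n = - rel_comb c $ n $ m" "rel_comb c $ m $ m = 0"
  by (simp_all add: rel_comb_def eps_repeat eps_swap23[of _ n m] sum_negf[symmetric])

definition cross7 :: "'a::field^7 \<Rightarrow> 'a^7 \<Rightarrow> 'a^7" where
  "cross7 u v = (\<chi> i. \<Sum>r\<in>UNIV. \<Sum>s\<in>UNIV. eps r s i * u$r * v$s)"

lemma octo_mult_imaginary:
  "octo_mult (0, u) (0, v) = (- (\<Sum>r\<in>UNIV. u$r * v$r), cross7 u v)"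
  by (simp add: octo_mult_def cross7_def)

lemma cross7_self:
  assumes "(2::'a::field) \<noteq> 0"
  shows "cross7 u u = (0::'a^7)"
proof -
  have "(\<Sum>r\<in>UNIV. \<Sum>s\<in>UNIV. eps r s i * u$r * u$s) = (0::'a)" for i
  proof (rule sum_antisym_eq_0[OF assms])
    fix r s
    show "eps s r i * u$s * u$r = - (eps r s i * u$r * u$s :: 'a)"
      unfolding eps_swap[of s r i] by (simp add: mult_ac)
  qed
  then show ?thesis by (simp add: cross7_def vec_eq_iff)
qed

lemma vector_matrix_mult_rel_comb: "v v* rel_comb c = cross7 c v"
proof -
  have "(\<Sum>m\<in>UNIV. v$m * (\<Sum>i\<in>UNIV. c$i * eps i m n))
      = (\<Sum>i\<in>UNIV. \<Sum>m\<in>UNIV. eps i m n * c$i * v$m)" for n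
    by (subst sum.swap) (simp add: sum_distrib_left ac_simps)
  then show ?thesis
    by (simp add: vec_eq_iff vector_matrix_mult_def rel_comb_def cross7_def)
qed

lemma rel_comb_mult_self:
  assumes "(2::'a::field) \<noteq> 0"
  shows "rel_comb c *v c = (0::'a^7)"
proof -
  have "rel_comb c *v c = - (c v* rel_comb c)"
    by (rule antisym_matrix_vector_mult) (rule rel_comb_alternating)
  then show ?thesis by (simp add: vector_matrix_mult_rel_comb cross7_self[OF assms])
qed

lemma octo_division_imaginary_square_nonzero:
  fixes u :: "'a::field^7"
  assumes two: "(2::'a) \<noteq> 0" and div: "octo_division TYPE('a)" and u: "u \<noteq> 0"
  shows "(\<Sum>r\<in>UNIV. u$r * u$r) \<noteq> 0"
proof
  assume "(\<Sum>r\<in>UNIV. u$r * u$r) = 0"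
  then have "octo_mult (0, u) (0, u) = octo_mult (0, u) (0, 0)"
    by (simp add: octo_mult_imaginary cross7_self[OF two]) (simp add: cross7_def vec_eq_iff)
  moreover have "inj (octo_mult (0, u))"
    using div u by (simp add: octo_division_def bij_is_inj)
  ultimately show False using u by (simp add: inj_eq)
qed

text \<open>z = (u.u) v - (u.v) u is orthogonal to u and still has u x z = 0, so the octonion
  product of u and z is 0, whence z = 0.\<close>
lemma octo_division_cross7_eq_0:
  fixes u v :: "'a::field^7"
  assumes two: "(2::'a) \<noteq> 0" and div: "octo_division TYPE('a)" and u: "u \<noteq> 0"
    and uv: "cross7 u v = 0"
  shows "\<exists>t. v = t *s u"
proof -
  define a where "a = (\<Sum>r\<in>UNIV. u$r * u$r)"
  define b where "b = (\<Sum>r\<in>UNIV. u$r * v$r)"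
  define z where "z = a *s v - b *s u"
  have "(\<Sum>r\<in>UNIV. u$r * z$r) = a * (\<Sum>r\<in>UNIV. u$r * v$r) - b * (\<Sum>r\<in>UNIV. u$r * u$r)"
    by (simp add: z_def algebra_simps sum_subtractf sum_distrib_left)
  then have "(\<Sum>r\<in>UNIV. u$r * z$r) = 0"
    by (simp add: a_def b_def)
  moreover have "cross7 u z = 0"
    using uv cross7_self[OF two, of u]
    by (simp add: z_def cross7_def vec_eq_iff algebra_simps sum_subtractf sum_distrib_left
        flip: sum_distrib_left)
  ultimately have "octo_mult (0, u) (0, z) = octo_mult (0, u) (0, 0)"
    by (simp add: octo_mult_imaginary) (simp add: cross7_def vec_eq_iff)
  moreover have "inj (octo_mult (0, u))"
    using div u by (simp add: octo_division_def bij_is_inj)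
  ultimately have "a *s v = b *s u" by (simp add: inj_eq z_def)
  moreover have "a \<noteq> 0"
    unfolding a_def by (rule octo_division_imaginary_square_nonzero[OF two div u])
  ultimately have "v = (b / a) *s u" by (simp add: vec_eq_iff field_simps)
  then show ?thesis by blast
qed

lemma rank_rel_comb_octo_division:
  fixes c :: "'a::field^7"
  assumes two: "(2::'a) \<noteq> 0" and div: "octo_division TYPE('a)" and c: "c \<noteq> 0"
  shows "rank (rel_comb c) = 6"
proof -
  have "rank (rel_comb c) < CARD(7)"
    by (rule rank_less_ncols_if_nontrivial_kernel[OF rel_comb_mult_self[OF two] c])
  moreover have "CARD(7) - 1 \<le> rank (rel_comb c)"
    by (rule corank_le_1_if_left_kernel_in_line[OF c])
      (simp add: vector_matrix_mult_rel_comb octo_division_cross7_eq_0[OF two div c])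
  ultimately show ?thesis by simp
qed

lemma pfaffian4_rel_comb:
  "pfaffian4 (rel_comb c) 4 5 6 7 = c$1 * c$1 + c$2 * c$2 + c$3 * c$3"
  "pfaffian4 (rel_comb c) 2 3 4 5 = c$1 * c$1 + c$6 * c$6 + c$7 * c$7"
  "pfaffian4 (rel_comb c) 2 3 6 7 = c$1 * c$1 + c$4 * c$4 + c$5 * c$5"
  "pfaffian4 (rel_comb c) 1 3 5 7 = c$2 * c$2 + c$4 * c$4 + c$6 * c$6"
  "pfaffian4 (rel_comb c) 1 4 3 6 = c$2 * c$2 + c$5 * c$5 + c$7 * c$7"
  "pfaffian4 (rel_comb c) 1 5 2 6 = c$3 * c$3 + c$4 * c$4 + c$7 * c$7"
  "pfaffian4 (rel_comb c) 1 4 2 7 = c$3 * c$3 + c$5 * c$5 + c$6 * c$6"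
  "pfaffian4 (rel_comb c) 1 3 4 5 = c$4 * c$7 + c$5 * c$6 - c$1 * c$2"
  "pfaffian4 (rel_comb c) 1 3 6 7 = - (c$4 * c$7 + c$5 * c$6) - c$1 * c$2"
  by (simp_all add: pfaffian4_def rel_comb_def sum_UNIV_7 eps_unfold algebra_simps)

text \<open>Two lines through x_1 minus two lines through x_j give 2 (x_1^2 - x_j^2) = 0,
  so all squares agree, and x_1 x_2 = 0 then kills x_1^4.\<close>
lemma eq_0_if_line_sums_of_squares_eq_0:
  fixes x1 x2 x3 x4 x5 x6 x7 :: "'a::field"
  assumes two: "(2::'a) \<noteq> 0"
    and L123: "x1*x1 + x2*x2 + x3*x3 = 0" and L145: "x1*x1 + x4*x4 + x5*x5 = 0"
    and L167: "x1*x1 + x6*x6 + x7*x7 = 0" and L246: "x2*x2 + x4*x4 + x6*x6 = 0"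
    and L257: "x2*x2 + x5*x5 + x7*x7 = 0" and L347: "x3*x3 + x4*x4 + x7*x7 = 0"
    and L356: "x3*x3 + x5*x5 + x6*x6 = 0" and x12: "x1*x2 = 0"
  shows "x1 = 0 \<and> x2 = 0 \<and> x3 = 0 \<and> x4 = 0 \<and> x5 = 0 \<and> x6 = 0 \<and> x7 = 0"
proof -
  have square_eq: "x1*x1 = y*y"
    if "L1 + L2 - L3 - L4 = 2*(x1*x1 - y*y)" "L1 = 0" "L2 = 0" "L3 = 0" "L4 = 0" for L1 L2 L3 L4 y
    using that two by simp
  have "x1*x1 = x2*x2" by (rule square_eq[OF _ L145 L167 L246 L257]) (simp add: algebra_simps)
  moreover have "x1*x1 = x3*x3" by (rule square_eq[OF _ L145 L167 L347 L356]) (simp add: algebra_simps)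
  moreover have "x1*x1 = x4*x4" by (rule square_eq[OF _ L123 L167 L246 L347]) (simp add: algebra_simps)
  moreover have "x1*x1 = x5*x5" by (rule square_eq[OF _ L123 L167 L257 L356]) (simp add: algebra_simps)
  moreover have "x1*x1 = x6*x6" by (rule square_eq[OF _ L123 L145 L246 L356]) (simp add: algebra_simps)
  moreover have "x1*x1 = x7*x7" by (rule square_eq[OF _ L123 L145 L257 L347]) (simp add: algebra_simps)
  moreover have "x1 = 0"
  proof -
    have "(x1*x1)*(x1*x1) = (x1*x2)*(x1*x2)" using \<open>x1*x1 = x2*x2\<close> by (simp add: algebra_simps)
    then show ?thesis using x12 by simp
  qed
  ultimately show ?thesis by simp
qed

lemma rel_comb_pfaffian4_nonzero:
  fixes c :: "'a::field^7"
  assumes two: "(2::'a) \<noteq> 0" and c: "c \<noteq> 0"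
  shows "\<exists>a b d e. distinct [a,b,d,e] \<and> pfaffian4 (rel_comb c) a b d e \<noteq> 0"
proof (rule ccontr)
  assume "\<not> ?thesis"
  then have pf: "pfaffian4 (rel_comb c) a b d e = 0" if "distinct [a,b,d,e]" for a b d e
    using that by blast
  have "c$1 * c$1 + c$2 * c$2 + c$3 * c$3 = 0" "c$1 * c$1 + c$4 * c$4 + c$5 * c$5 = 0"
    "c$1 * c$1 + c$6 * c$6 + c$7 * c$7 = 0" "c$2 * c$2 + c$4 * c$4 + c$6 * c$6 = 0"
    "c$2 * c$2 + c$5 * c$5 + c$7 * c$7 = 0" "c$3 * c$3 + c$4 * c$4 + c$7 * c$7 = 0"
    "c$3 * c$3 + c$5 * c$5 + c$6 * c$6 = 0"
    using pf[of 4 5 6 7] pf[of 2 3 6 7] pf[of 2 3 4 5] pf[of 1 3 5 7] pf[of 1 4 3 6]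
      pf[of 1 5 2 6] pf[of 1 4 2 7]
    by (simp_all add: pfaffian4_rel_comb)
  moreover have "c$1 * c$2 = 0"
  proof -
    have "pfaffian4 (rel_comb c) 1 3 4 5 + pfaffian4 (rel_comb c) 1 3 6 7 = - 2 * (c$1 * c$2)"
      by (simp add: pfaffian4_rel_comb algebra_simps)
    then show ?thesis using pf[of 1 3 4 5] pf[of 1 3 6 7] two by simp
  qed
  ultimately have "c$i = 0" for i
    using eq_0_if_line_sums_of_squares_eq_0[OF two] exhaust_7[of i] by blast
  with c show False by (simp add: vec_eq_iff)
qed

lemma rank_rel_comb_ge_4:
  fixes c :: "'a::field^7"
  assumes "(2::'a) \<noteq> 0" and "c \<noteq> 0"
  shows "4 \<le> rank (rel_comb c)"
  using rel_comb_pfaffian4_nonzero[OF assms]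
    rank_ge_4_if_pfaffian4_nonzero[OF rel_comb_alternating] by blast

lemma rank_rel_comb_isotropic:
  fixes x :: "'a::field"
  assumes x: "x * x = -1"
  defines "c \<equiv> \<chi> i. if i = 1 then 1 else if i = 2 then x else 0"
  shows "rank (rel_comb c) = 4"
proof -
  let ?M = "rel_comb c"
  have c: "c$1 = 1" "c$2 = x" "c$3 = 0" "c$4 = 0" "c$5 = 0" "c$6 = 0" "c$7 = 0"
    by (simp_all add: c_def)
  have "pfaffian4 ?M 2 3 4 5 = 1" by (simp add: pfaffian4_rel_comb c)
  then have lower: "4 \<le> rank ?M"
    by (intro rank_ge_4_if_pfaffian4_nonzero[OF rel_comb_alternating, of 2 3 4 5]) simp_all
  have rows: "row 1 ?M = (- x) *s row 2 ?M" "row 6 ?M = x *s row 5 ?M" "row 7 ?M = x *s row 4 ?M"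
    by (simp_all add: vec_eq_iff all_7 row_def rel_comb_def sum_UNIV_7 eps_unfold c x)
  define S where "S = {row 2 ?M, row 3 ?M, row 4 ?M, row 5 ?M}"
  have "row i ?M \<in> vec.span S" for i
  proof -
    have base: "row 2 ?M \<in> vec.span S" "row 3 ?M \<in> vec.span S"
      "row 4 ?M \<in> vec.span S" "row 5 ?M \<in> vec.span S"
      by (simp_all add: S_def vec.span_base)
    show ?thesis
      using exhaust_7[of i] by (elim disjE) (simp_all add: rows base vec.span_scale vec.span_neg)
  qed
  then have "rank ?M \<le> card S"
    by (intro rank_le_card_if_rows_spanned) (auto simp: rows_def S_def)
  also have "card S \<le> 4"
    using card_length[of "[row 2 ?M, row 3 ?M, row 4 ?M, row 5 ?M]"] by (simp add: S_def)
  finally show ?thesis using lower by simp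
qed

theorem lemma11p1:
  assumes "(2::'a::field) \<noteq> 0"
  shows "rank (W_map_matrix :: 'a^(7\<times>7)^7) = 7
    \<and> (octo_division TYPE('a) \<longrightarrow>
         (\<forall>M::'a^7^7. M \<in> R_space \<and> M \<noteq> 0 \<longrightarrow> rank M = 6))
    \<and> ((2::'b::alg_closed_field) \<noteq> 0 \<longrightarrow>
         (\<forall>M::'b^7^7. M \<in> R_space \<and> M \<noteq> 0 \<longrightarrow> rank M \<ge> 4)
         \<and> (\<exists>M::'b^7^7. M \<in> R_space \<and> M \<noteq> 0 \<and> rank M = 4))"
proof (intro conjI impI allI)
  show "rank (W_map_matrix :: 'a^(7\<times>7)^7) = 7" by (rule rank_W_map_matrix)
next
  fix M :: "'a^7^7"
  assume div: "octo_division TYPE('a)" and "M \<in> R_space \<and> M \<noteq> 0"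
  then obtain c where "M = rel_comb c" "c \<noteq> 0" by (metis R_space_iff_rel_comb rel_comb_0)
  then show "rank M = 6" using rank_rel_comb_octo_division[OF assms div] by simp
next
  fix M :: "'b^7^7"
  assume two: "(2::'b) \<noteq> 0" and "M \<in> R_space \<and> M \<noteq> 0"
  then obtain c where "M = rel_comb c" "c \<noteq> 0" by (metis R_space_iff_rel_comb rel_comb_0)
  then show "4 \<le> rank M" using rank_rel_comb_ge_4[OF two] by simp
next
  obtain x :: 'b where "x * x = -1"
    using nth_root_exists[of 2 "-1"] by (auto simp: power2_eq_square)
  then have rank4: "rank (rel_comb (\<chi> i. if i = 1 then 1 else if i = 2 then x else 0)) = 4"
    by (rule rank_rel_comb_isotropic)
  then have "rel_comb (\<chi> i. if i = 1 then 1 else if i = 2 then x else 0) \<noteq> 0"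
    by (auto simp: rank_zero)
  with rank4 show "\<exists>M::'b^7^7. M \<in> R_space \<and> M \<noteq> 0 \<and> rank M = 4"
    unfolding R_space_iff_rel_comb by blast
qed

end
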